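(* $$\lim_{n\to\infty}\left(\frac{\alpha_n(1\text{-}23\text{-}4)}{n!}\right)^{1/n}=0.$$
   Context: A permutation $\pi=\pi_1\cdots\pi_n$ of $\{1,\dots,n\}$ contains the generalized pattern $1\text{-}23\text{-}4$ if there are indices $a<b<b+1<c$ with $\pi_a<\pi_b<\pi_{b+1}<\pi_c$; otherwise it avoids it. $\alpha_n(1\text{-}23\text{-}4)$ is the number of permutations of $\{1,\dots,n\}$ avoiding it. *)

theory Defs
  imports "HOL-Analysis.Analysis" "HOL-Combinatorics.Permutations"
begin

definition contains_1_23_4 :: "nat \<Rightarrow> (nat \<Rightarrow> nat) \<Rightarrow> bool" where
  "contains_1_23_4 n p \<longleftrightarrow>
     (\<exists>a b c. 1 \<le> a \<and> a < b \<and> b + 1 < c \<and> c \<le> n \<and>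
        p a < p b \<and> p b < p (b + 1) \<and> p (b + 1) < p c)"

definition alpha_1_23_4 :: "nat \<Rightarrow> nat" where
  "alpha_1_23_4 n = card {p. p permutes {1..n} \<and> \<not> contains_1_23_4 n p}"

end

theory Submission
  imports Defs
begin

text \<open>Let A be the positions of the left-to-right minima and B those of the right-to-left
  maxima (the records) of an avoider p. If neither k nor k + 1 lies in A \<union> B, then
  p (k + 1) < p k, since otherwise an earlier smaller entry and a later larger one complete an
  occurrence of 1-23-4. So p is decreasing on A, on B and on every run of positions between
  consecutive records. Each such colour class is mapped decreasingly onto its set of values,
  hence p is determined by the colours of its positions and of its values. With
  s = card (A \<union> B) this leaves at most 8^n 2^n (s + 1)^(n - s) avoiders for some s \<le> n, and
  (s + 1)^(n - s) is eventually below (n / K)^n for every K, whereas n! \<ge> (n / e)^n.\<close>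

lemma card_greater_eq_imp_eq:
  fixes V :: "'a::linorder set"
  assumes "finite V" "x \<in> V" "y \<in> V" "card {v \<in> V. x < v} = card {v \<in> V. y < v}"
  shows "x = y"
proof (rule ccontr)
  have less: "card {v \<in> V. b < v} < card {v \<in> V. a < v}" if "b \<in> V" "a < b" for a b
    by (rule psubset_card_mono) (use assms(1) that in auto)
  assume "x \<noteq> y"
  then show False
  proof (rule linorder_neqE)
    assume "x < y"
    then show False using less[of y x] assms by simp
  next
    assume "y < x"
    then show False using less[of x y] assms by simp
  qed
qed

lemma card_greater_image_strict_antimono:
  fixes f :: "'a::linorder \<Rightarrow> 'b::linorder"
  assumes dec: "\<And>i j. i \<in> C \<Longrightarrow> j \<in> C \<Longrightarrow> i < j \<Longrightarrow> f j < f i" and "i \<in> C"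
  shows "card {w \<in> f ` C. f i < w} = card {j \<in> C. j < i}"
proof -
  have "inj_on f C"
    by (rule linorder_inj_onI') (metis dec less_irrefl)
  moreover have "{w \<in> f ` C. f i < w} = f ` {j \<in> C. j < i}"
  proof (intro equalityI subsetI)
    fix w assume "w \<in> {w \<in> f ` C. f i < w}"
    then obtain j where "j \<in> C" "w = f j" "f i < f j" by auto
    moreover from this have "j < i"
      using dec[of i j] \<open>i \<in> C\<close> by (metis less_asym linorder_neqE)
    ultimately show "w \<in> f ` {j \<in> C. j < i}" by blast
  qed (use dec \<open>i \<in> C\<close> in auto)
  ultimately show ?thesis
    by (simp add: card_image inj_on_subset)
qed

lemma strict_antimono_on_eq_if_image_eq:
  fixes f g :: "'a::linorder \<Rightarrow> 'b::linorder"
  assumes "finite C" and image: "f ` C = g ` C"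
    and dec_f: "\<And>i j. i \<in> C \<Longrightarrow> j \<in> C \<Longrightarrow> i < j \<Longrightarrow> f j < f i"
    and dec_g: "\<And>i j. i \<in> C \<Longrightarrow> j \<in> C \<Longrightarrow> i < j \<Longrightarrow> g j < g i"
    and "i \<in> C"
  shows "f i = g i"
proof (rule card_greater_eq_imp_eq)
  show "finite (f ` C)" "f i \<in> f ` C" "g i \<in> f ` C"
    using \<open>finite C\<close> \<open>i \<in> C\<close> image by auto
  have "card {w \<in> f ` C. f i < w} = card {j \<in> C. j < i}"
    using card_greater_image_strict_antimono[of C f, OF dec_f \<open>i \<in> C\<close>] .
  also have "\<dots> = card {w \<in> g ` C. g i < w}"
    using card_greater_image_strict_antimono[of C g, OF dec_g \<open>i \<in> C\<close>] by simp
  finally show "card {w \<in> f ` C. f i < w} = card {w \<in> f ` C. g i < w}"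
    unfolding image .
qed

lemma permutes_eq_if_colours_eq:
  fixes c :: "'a::linorder \<Rightarrow> 'c"
  assumes p: "p permutes S" and q: "q permutes S" and "finite S"
    and colours: "\<And>v. v \<in> S \<Longrightarrow> c (inv p v) = c (inv q v)"
    and dec_p: "\<And>i j. i \<in> S \<Longrightarrow> j \<in> S \<Longrightarrow> i < j \<Longrightarrow> c i = c j \<Longrightarrow> p j < p i"
    and dec_q: "\<And>i j. i \<in> S \<Longrightarrow> j \<in> S \<Longrightarrow> i < j \<Longrightarrow> c i = c j \<Longrightarrow> q j < q i"
  shows "p = q"
proof
  fix i
  show "p i = q i"
  proof (cases "i \<in> S")
    case True
    define C where "C = {j \<in> S. c j = c i}"
    have image_C: "r ` C = {v \<in> S. c (inv r v) = c i}" if r: "r permutes S" for r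
    proof (intro equalityI subsetI)
      fix v assume "v \<in> r ` C"
      then show "v \<in> {v \<in> S. c (inv r v) = c i}"
        unfolding C_def using r by (auto simp: permutes_in_image permutes_inverses(2))
    next
      fix v assume "v \<in> {v \<in> S. c (inv r v) = c i}"
      then have "inv r v \<in> C"
        unfolding C_def using permutes_inv[OF r] by (simp add: permutes_in_image)
      moreover have "v = r (inv r v)"
        using r by (simp add: permutes_inverses(1))
      ultimately show "v \<in> r ` C" by blast
    qed
    have "p ` C = q ` C"
      unfolding image_C[OF p] image_C[OF q] using colours by auto
    then show ?thesis
      by (rule strict_antimono_on_eq_if_image_eq[rotated])
         (use \<open>finite S\<close> True in \<open>auto simp: C_def intro: dec_p dec_q\<close>)
  qed (use p q in \<open>simp add: permutes_not_in\<close>)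
qed

definition is_lr_min :: "(nat \<Rightarrow> nat) \<Rightarrow> nat \<Rightarrow> bool" where
  "is_lr_min p i \<longleftrightarrow> (\<forall>j. 1 \<le> j \<and> j < i \<longrightarrow> p i < p j)"

definition is_rl_max :: "nat \<Rightarrow> (nat \<Rightarrow> nat) \<Rightarrow> nat \<Rightarrow> bool" where
  "is_rl_max n p i \<longleftrightarrow> (\<forall>j. i < j \<and> j \<le> n \<longrightarrow> p j < p i)"

definition lr_minima :: "nat \<Rightarrow> (nat \<Rightarrow> nat) \<Rightarrow> nat set" where
  "lr_minima n p = {i \<in> {1..n}. is_lr_min p i}"

definition rl_maxima :: "nat \<Rightarrow> (nat \<Rightarrow> nat) \<Rightarrow> nat set" where
  "rl_maxima n p = {i \<in> {1..n}. is_rl_max n p i}"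

text \<open>Positions outside A \<union> B are coloured by the gap between consecutive elements of
  A \<union> B in which they lie.\<close>
definition record_colouring :: "nat set \<Rightarrow> nat set \<Rightarrow> nat \<Rightarrow> nat" where
  "record_colouring A B i =
     (if i \<in> A then 0 else if i \<in> B then 1 else 2 + card {j \<in> A \<union> B. j < i})"

abbreviation record_colouring_of :: "nat \<Rightarrow> (nat \<Rightarrow> nat) \<Rightarrow> nat \<Rightarrow> nat" where
  "record_colouring_of n p \<equiv> record_colouring (lr_minima n p) (rl_maxima n p)"

lemma avoider_descent:
  assumes "inj p" and avoids: "\<not> contains_1_23_4 n p"
    and "\<not> is_lr_min p k" "\<not> is_rl_max n p (Suc k)"
  shows "p (Suc k) < p k"
proof (rule ccontr)
  have neq: "p i \<noteq> p j" if "i \<noteq> j" for i j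
    using \<open>inj p\<close> that by (auto dest: injD)
  assume "\<not> p (Suc k) < p k"
  then have up: "p k < p (Suc k)"
    using neq[of "Suc k" k] by simp
  obtain a where a: "1 \<le> a" "a < k" "\<not> p k < p a"
    using \<open>\<not> is_lr_min p k\<close> unfolding is_lr_min_def by auto
  obtain c where c: "Suc k < c" "c \<le> n" "\<not> p c < p (Suc k)"
    using \<open>\<not> is_rl_max n p (Suc k)\<close> unfolding is_rl_max_def by auto
  have "p a < p k" "p (Suc k) < p c"
    using a c neq[of a k] neq[of c "Suc k"] by auto
  then have "contains_1_23_4 n p"
    unfolding contains_1_23_4_def using a c up by (metis Suc_eq_plus1)
  with avoids show False ..
qed

lemma avoider_decreasing_between_records:
  assumes "inj p" "\<not> contains_1_23_4 n p" "1 \<le> i" "i < j" "j \<le> n"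
    and outside: "\<And>k. i \<le> k \<Longrightarrow> k \<le> j \<Longrightarrow> k \<notin> lr_minima n p \<union> rl_maxima n p"
  shows "p j < p i"
proof -
  have "- int (p i) < - int (p j)"
  proof (rule lift_Suc_mono_less_ivl[of "{i..<j}" "\<lambda>k. - int (p k)"])
    fix k assume "k \<in> {i..<j}"
    then have "\<not> is_lr_min p k" "\<not> is_rl_max n p (Suc k)"
      using outside[of k] outside[of "Suc k"] assms(3,5) by (auto simp: lr_minima_def rl_maxima_def)
    then show "- int (p k) < - int (p (Suc k))"
      using avoider_descent[OF assms(1,2)] by simp
  qed (use \<open>i < j\<close> in auto)
  then show ?thesis by simp
qed

lemma avoider_colour_classes_decreasing:
  assumes "inj p" "\<not> contains_1_23_4 n p" "i \<in> {1..n}" "j \<in> {1..n}" "i < j"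
    and same: "record_colouring_of n p i = record_colouring_of n p j"
  shows "p j < p i"
proof -
  let ?A = "lr_minima n p" and ?B = "rl_maxima n p"
  consider "i \<in> ?A" "j \<in> ?A" | "i \<in> ?B" "j \<in> ?B" | "i \<notin> ?A \<union> ?B" "j \<notin> ?A \<union> ?B"
    using same by (auto simp: record_colouring_def split: if_splits)
  then show ?thesis
  proof cases
    case 1
    then show ?thesis using \<open>i < j\<close> \<open>i \<in> {1..n}\<close> by (auto simp: lr_minima_def is_lr_min_def)
  next
    case 2
    then show ?thesis using \<open>i < j\<close> \<open>j \<in> {1..n}\<close> by (auto simp: rl_maxima_def is_rl_max_def)
  next
    case 3
    have "card {k \<in> ?A \<union> ?B. k < i} = card {k \<in> ?A \<union> ?B. k < j}"
      using same 3 by (simp add: record_colouring_def)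
    then have same_before: "{k \<in> ?A \<union> ?B. k < i} = {k \<in> ?A \<union> ?B. k < j}"
      by (rule card_subset_eq[rotated 2]) (use \<open>i < j\<close> in \<open>auto simp: lr_minima_def rl_maxima_def\<close>)
    have outside: "k \<notin> ?A \<union> ?B" if "i \<le> k" "k \<le> j" for k
    proof
      assume "k \<in> ?A \<union> ?B"
      moreover from this have "k < j"
        using 3 \<open>k \<le> j\<close> by (metis le_neq_implies_less)
      ultimately have "k \<in> {k \<in> ?A \<union> ?B. k < i}"
        unfolding same_before by blast
      with \<open>i \<le> k\<close> show False by simp
    qed
    show ?thesis
      by (rule avoider_decreasing_between_records[OF assms(1,2) _ \<open>i < j\<close> _ outside])
         (use \<open>i \<in> {1..n}\<close> \<open>j \<in> {1..n}\<close> in auto)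
  qed
qed

definition avoiders :: "nat \<Rightarrow> (nat \<Rightarrow> nat) set" where
  "avoiders n = {p. p permutes {1..n} \<and> \<not> contains_1_23_4 n p}"

definition encode :: "nat \<Rightarrow> (nat \<Rightarrow> nat) \<Rightarrow> (nat \<Rightarrow> nat) \<times> (nat \<Rightarrow> nat)" where
  "encode n p = (restrict (record_colouring_of n p) {1..n},
                 restrict (record_colouring_of n p \<circ> inv p) {1..n})"

lemma inj_on_encode: "inj_on (encode n) (avoiders n)"
proof (rule inj_onI)
  fix p q assume "p \<in> avoiders n" "q \<in> avoiders n" and same_code: "encode n p = encode n q"
  then have p: "p permutes {1..n}" "\<not> contains_1_23_4 n p"
    and q: "q permutes {1..n}" "\<not> contains_1_23_4 n q"
    by (auto simp: avoiders_def)
  let ?c = "record_colouring_of n p" and ?d = "record_colouring_of n q"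
  have pos: "restrict ?c {1..n} = restrict ?d {1..n}"
    and val: "restrict (?c \<circ> inv p) {1..n} = restrict (?d \<circ> inv q) {1..n}"
    using same_code by (simp_all add: encode_def)
  have same_pos: "?c i = ?d i" and same_val: "?c (inv p i) = ?d (inv q i)" if "i \<in> {1..n}" for i
    using fun_cong[OF pos, of i] fun_cong[OF val, of i] that by simp_all
  have inv_q: "inv q v \<in> {1..n}" if "v \<in> {1..n}" for v
    using that permutes_in_image[OF permutes_inv[OF q(1)]] by blast
  show "p = q"
  proof (rule permutes_eq_if_colours_eq[OF p(1) q(1), where c = ?c])
    show "?c (inv p v) = ?c (inv q v)" if "v \<in> {1..n}" for v
      using same_val[OF that] same_pos[OF inv_q[OF that]] by simp
    show "p j < p i" if "i \<in> {1..n}" "j \<in> {1..n}" "i < j" "?c i = ?c j" for i j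
      using avoider_colour_classes_decreasing[OF permutes_inj[OF p(1)] p(2) that] .
    show "q j < q i" if "i \<in> {1..n}" "j \<in> {1..n}" "i < j" "?c i = ?c j" for i j
      using avoider_colour_classes_decreasing[OF permutes_inj[OF q(1)] q(2) that(1-3)]
        that(4) same_pos[OF that(1)] same_pos[OF that(2)] by simp
  qed simp
qed

text \<open>In the code of an avoider, A and B are its records and X is the set of its values at
  positions outside A \<union> B; these values receive one of the s + 1 run colours, where
  s = card (A \<union> B), and all other values colour 0 or 1.\<close>
definition value_colours :: "nat \<Rightarrow> nat set \<Rightarrow> nat \<Rightarrow> nat set" where
  "value_colours s X v = (if v \<in> X then {2..s+2} else {0, 1})"

definition code_shapes :: "nat \<Rightarrow> (nat set \<times> nat set \<times> nat set) set" where
  "code_shapes n =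
     {(A, B, X). A \<subseteq> {1..n} \<and> B \<subseteq> {1..n} \<and> X \<subseteq> {1..n} \<and> card X + card (A \<union> B) = n}"

definition code_block ::
    "nat \<Rightarrow> nat set \<times> nat set \<times> nat set \<Rightarrow> ((nat \<Rightarrow> nat) \<times> (nat \<Rightarrow> nat)) set" where
  "code_block n = (\<lambda>(A, B, X).
     {restrict (record_colouring A B) {1..n}} \<times> PiE {1..n} (value_colours (card (A \<union> B)) X))"

definition codes :: "nat \<Rightarrow> ((nat \<Rightarrow> nat) \<times> (nat \<Rightarrow> nat)) set" where
  "codes n = (\<Union>q \<in> code_shapes n. code_block n q)"

lemma record_colouring_of_inv_in_value_colours:
  assumes p: "p permutes {1..n}" and "v \<in> {1..n}"
  defines "R \<equiv> lr_minima n p \<union> rl_maxima n p"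
  shows "record_colouring_of n p (inv p v) \<in> value_colours (card R) (p ` ({1..n} - R)) v"
proof -
  define i where "i = inv p v"
  have i: "i \<in> {1..n}" "p i = v"
    unfolding i_def using \<open>v \<in> {1..n}\<close> permutes_in_image[OF permutes_inv[OF p]]
    by (auto simp: permutes_inverses(1)[OF p])
  have "v \<in> p ` ({1..n} - R) \<longleftrightarrow> i \<notin> R"
    using i inj_image_mem_iff[OF permutes_inj[OF p]] by blast
  moreover have "card {j \<in> R. j < i} \<le> card R"
    by (rule card_mono) (auto simp: R_def lr_minima_def rl_maxima_def)
  ultimately show ?thesis
    by (auto simp: i_def[symmetric] R_def record_colouring_def value_colours_def)
qed

lemma encode_in_codes:
  assumes "p \<in> avoiders n"
  shows "encode n p \<in> codes n"
proof -
  let ?A = "lr_minima n p" and ?B = "rl_maxima n p"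
  have p: "p permutes {1..n}" using assms by (simp add: avoiders_def)
  have records: "?A \<union> ?B \<subseteq> {1..n}" by (auto simp: lr_minima_def rl_maxima_def)
  define X where "X = p ` ({1..n} - (?A \<union> ?B))"
  have "X \<subseteq> {1..n}"
    unfolding X_def using permutes_image[OF p] by blast
  moreover have "card X = n - card (?A \<union> ?B)"
  proof -
    have "card X = card ({1..n} - (?A \<union> ?B))"
      unfolding X_def by (simp add: card_image inj_on_subset[OF permutes_inj[OF p]])
    also have "\<dots> = n - card (?A \<union> ?B)"
      using card_Diff_subset[OF finite_subset[OF records] records] by simp
    finally show ?thesis .
  qed
  moreover have "card (?A \<union> ?B) \<le> n"
    using card_mono[OF _ records] by simp
  ultimately have "(?A, ?B, X) \<in> code_shapes n"
    unfolding code_shapes_def using records by auto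
  moreover have "restrict (record_colouring_of n p \<circ> inv p) {1..n}
      \<in> PiE {1..n} (value_colours (card (?A \<union> ?B)) X)"
    unfolding X_def restrict_PiE_iff using record_colouring_of_inv_in_value_colours[OF p] by simp
  ultimately show ?thesis
    unfolding codes_def code_block_def encode_def by blast
qed

lemma card_code_shapes_le: "card (code_shapes n) \<le> 8 ^ n"
proof -
  have "code_shapes n \<subseteq> Pow {1..n} \<times> Pow {1..n} \<times> Pow {1..n}"
    by (auto simp: code_shapes_def)
  then have "card (code_shapes n) \<le> card (Pow {1..n} \<times> Pow {1..n} \<times> Pow {1..n::nat})"
    by (rule card_mono[rotated]) simp
  also have "\<dots> = 8 ^ n"
    by (simp add: card_cartesian_product card_Pow flip: power_mult_distrib)
  finally show ?thesis .
qed

lemma card_value_colourings_le: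
  assumes "X \<subseteq> {1..n}" "card X + s = n"
  shows "card (PiE {1..n} (value_colours s X)) \<le> 2 ^ n * (s + 1) ^ (n - s)"
proof -
  have "card (PiE {1..n} (value_colours s X)) = (\<Prod>v\<in>{1..n}. if v \<in> X then s + 1 else 2)"
    by (simp add: card_PiE) (rule prod.cong, auto simp: value_colours_def)
  also have "\<dots> = (s + 1) ^ card X * 2 ^ card ({1..n} - X)"
    using assms(1) by (simp add: prod.If_cases Int_absorb1 Diff_eq)
  also have "\<dots> \<le> (s + 1) ^ (n - s) * 2 ^ n"
  proof (rule mult_le_mono)
    have "card X = n - s"
      using assms(2) by simp
    then show "(s + 1) ^ card X \<le> (s + 1) ^ (n - s)"
      by simp
    show "2 ^ card ({1..n} - X) \<le> (2::nat) ^ n"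
      using card_mono[of "{1..n}" "{1..n} - X"] by (simp add: power_increasing)
  qed
  finally show ?thesis
    by (simp add: mult.commute)
qed

lemma finite_code_shapes: "finite (code_shapes n)"
  by (rule finite_subset[of _ "Pow {1..n} \<times> Pow {1..n} \<times> Pow {1..n}"]) (auto simp: code_shapes_def)

lemma finite_codes: "finite (codes n)"
  unfolding codes_def code_block_def using finite_code_shapes
  by (auto intro!: finite_PiE simp: value_colours_def)

lemma card_code_block_le:
  assumes "q \<in> code_shapes n" and "\<And>t. t \<le> n \<Longrightarrow> (t + 1) ^ (n - t) \<le> M"
  shows "card (code_block n q) \<le> 2 ^ n * M"
proof -
  obtain A B X where q: "q = (A, B, X)" "X \<subseteq> {1..n}" "card X + card (A \<union> B) = n"
    using assms(1) by (auto simp: code_shapes_def)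
  have "card (code_block n q) = card (PiE {1..n} (value_colours (card (A \<union> B)) X))"
    by (simp add: q(1) code_block_def card_cartesian_product)
  also have "\<dots> \<le> 2 ^ n * (card (A \<union> B) + 1) ^ (n - card (A \<union> B))"
    using q(2,3) by (rule card_value_colourings_le)
  also have "\<dots> \<le> 2 ^ n * M"
    using assms(2)[of "card (A \<union> B)"] q(3) by simp
  finally show ?thesis .
qed

lemma card_codes_le:
  assumes "\<And>t. t \<le> n \<Longrightarrow> (t + 1) ^ (n - t) \<le> M"
  shows "card (codes n) \<le> 16 ^ n * M"
proof -
  have "card (codes n) \<le> (\<Sum>q \<in> code_shapes n. card (code_block n q))"
    unfolding codes_def by (rule card_UN_le[OF finite_code_shapes])
  also have "\<dots> \<le> card (code_shapes n) * (2 ^ n * M)"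
    using sum_bounded_above[OF card_code_block_le[OF _ assms]] by simp
  also have "\<dots> \<le> 8 ^ n * (2 ^ n * M)"
    using card_code_shapes_le by simp
  also have "\<dots> = 16 ^ n * M"
    by (simp flip: power_mult_distrib)
  finally show ?thesis .
qed

lemma alpha_1_23_4_le: "\<exists>t\<le>n. alpha_1_23_4 n \<le> 16 ^ n * (t + 1) ^ (n - t)"
proof -
  define M where "M = Max ((\<lambda>t. (t + 1) ^ (n - t)) ` {..n})"
  have "M \<in> (\<lambda>t. (t + 1) ^ (n - t)) ` {..n}"
    unfolding M_def by (rule Max_in) auto
  then obtain t where "t \<le> n" "M = (t + 1) ^ (n - t)"
    by auto
  moreover have "alpha_1_23_4 n \<le> 16 ^ n * M"
  proof -
    have "alpha_1_23_4 n = card (encode n ` avoiders n)"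
      using card_image[OF inj_on_encode] by (simp add: alpha_1_23_4_def avoiders_def)
    also have "\<dots> \<le> card (codes n)"
      by (rule card_mono[OF finite_codes]) (auto intro: encode_in_codes)
    also have "\<dots> \<le> 16 ^ n * M"
      by (rule card_codes_le) (auto simp: M_def)
    finally show ?thesis .
  qed
  ultimately show ?thesis by blast
qed

lemma exp_of_nat_eq_power: "exp (real n) = exp 1 ^ n"
  using exp_of_nat_mult[of n 1] by simp

lemma pow_div_exp_le_fact: "(real n / exp 1) ^ n \<le> fact n"
proof -
  have exp_series: "(\<lambda>k. real n ^ k / fact k) sums exp (real n)"
    using exp_converges[of "real n"] by (simp add: divide_inverse mult.commute)
  have "real n ^ n / fact n \<le> exp (real n)"
    using sum_le_suminf[OF sums_summable[OF exp_series], of "{n}"] sums_unique[OF exp_series]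
    by simp
  then show ?thesis
    by (simp add: exp_of_nat_eq_power power_divide divide_le_eq mult.commute)
qed

lemma Suc_power_diff_le:
  fixes K :: real
  assumes "K > 0" "1 \<le> n" "t \<le> n" and small: "exp 1 * real n powr (-1/K) \<le> 1/K"
  shows "(real t + 1) ^ (n - t) \<le> (real n / K) ^ n"
proof (cases "real t + 1 \<le> real n / K")
  case True
  have "(real t + 1) ^ (n - t) \<le> (real t + 1) ^ n"
    by (simp add: power_increasing)
  also have "\<dots> \<le> (real n / K) ^ n"
    using True by (intro power_mono) simp_all
  finally show ?thesis .
next
  case False
  have n: "real n \<ge> 1" using \<open>1 \<le> n\<close> by simp
  have "(real t + 1) ^ (n - t) \<le> real n ^ (n - t)"
    using \<open>t \<le> n\<close> by (cases "t = n") (simp_all add: power_mono)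
  also have "\<dots> = real n powr real (n - t)"
    using n by (simp add: powr_realpow)
  also have "\<dots> \<le> real n powr (real n * (1 - 1/K) + 1)"
    using False n \<open>t \<le> n\<close> by (intro powr_mono) (simp_all add: algebra_simps)
  also have "\<dots> = real n * (real n * real n powr (-1/K)) ^ n"
  proof -
    have "real n powr (real n * (1 - 1/K)) = (real n powr (1 - 1/K)) ^ n"
      using n by (simp add: powr_powr mult.commute flip: powr_realpow)
    moreover have "real n powr (1 - 1/K) = real n * real n powr (-1/K)"
      using powr_add[of "real n" 1 "-1/K"] n by simp
    ultimately show ?thesis
      using n by (simp add: powr_add)
  qed
  also have "\<dots> \<le> exp 1 ^ n * (real n * real n powr (-1/K)) ^ n"
  proof (rule mult_right_mono)
    show "real n \<le> exp 1 ^ n"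
      using exp_ge_add_one_self[of "real n"] unfolding exp_of_nat_eq_power by linarith
  qed simp
  also have "\<dots> = (real n * (exp 1 * real n powr (-1/K))) ^ n"
    by (simp add: power_mult_distrib mult_ac)
  also have "\<dots> \<le> (real n / K) ^ n"
    using small n by (intro power_mono) (simp_all add: divide_inverse mult_left_mono)
  finally show ?thesis .
qed

lemma alpha_1_23_4_le_power_fact:
  fixes K :: real
  assumes "K > 0" "1 \<le> n" "exp 1 * real n powr (-1/K) \<le> 1/K"
  shows "real (alpha_1_23_4 n) \<le> (16 * exp 1 / K) ^ n * fact n"
proof -
  obtain t where "t \<le> n" and alpha: "alpha_1_23_4 n \<le> 16 ^ n * (t + 1) ^ (n - t)"
    using alpha_1_23_4_le by blast
  have "real (alpha_1_23_4 n) \<le> real (16 ^ n * (t + 1) ^ (n - t))"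
    using alpha by (simp only: of_nat_le_iff)
  also have "\<dots> = 16 ^ n * (real t + 1) ^ (n - t)"
    by (simp add: add.commute)
  also have "\<dots> \<le> 16 ^ n * (real n / K) ^ n"
    using Suc_power_diff_le[OF assms(1,2) \<open>t \<le> n\<close> assms(3)] by simp
  also have "\<dots> = (16 * exp 1 / K) ^ n * (real n / exp 1) ^ n"
  proof -
    have "16 * (real n / K) = 16 * exp 1 / K * (real n / exp 1)"
      by simp
    then show ?thesis
      by (simp flip: power_mult_distrib)
  qed
  also have "\<dots> \<le> (16 * exp 1 / K) ^ n * fact n"
    using \<open>K > 0\<close> pow_div_exp_le_fact by (intro mult_left_mono) simp_all
  finally show ?thesis .
qed

lemma eventually_root_alpha_1_23_4_div_fact_le:
  fixes c :: real
  assumes "c > 0"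
  shows "\<forall>\<^sub>F n in sequentially. root n (real (alpha_1_23_4 n) / fact n) \<le> c"
proof -
  define K where "K = 16 * exp 1 / c"
  have "K > 0" using \<open>c > 0\<close> by (simp add: K_def)
  have "(\<lambda>n. exp 1 * real n powr (-1/K)) \<longlonglongrightarrow> exp 1 * 0"
    using \<open>K > 0\<close> by (intro tendsto_mult tendsto_const tendsto_neg_powr filterlim_real_sequentially) simp
  then have "\<forall>\<^sub>F n in sequentially. exp 1 * real n powr (-1/K) < 1/K"
    by (rule order_tendstoD(2)) (use \<open>K > 0\<close> in simp)
  then show ?thesis
    using eventually_ge_at_top[of "1::nat"]
  proof eventually_elim
    case (elim n)
    have "16 * exp 1 / K = c"
      using \<open>c > 0\<close> by (simp add: K_def)
    then have "real (alpha_1_23_4 n) / fact n \<le> c ^ n"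
      using alpha_1_23_4_le_power_fact[OF \<open>K > 0\<close> elim(2)] elim(1) by (simp add: divide_le_eq)
    then have "root n (real (alpha_1_23_4 n) / fact n) \<le> root n (c ^ n)"
      using elim(2) by (intro real_root_le_mono) simp_all
    also have "\<dots> = c"
      using elim(2) \<open>c > 0\<close> by (simp add: real_root_power_cancel)
    finally show ?case .
  qed
qed

theorem mainTheorem11:
  shows "(\<lambda>n. root n (real (alpha_1_23_4 n) / fact n)) \<longlonglongrightarrow> 0"
proof (rule order_tendstoI)
  fix a :: real
  assume "a < 0"
  then show "\<forall>\<^sub>F n in sequentially. a < root n (real (alpha_1_23_4 n) / fact n)"
    by (intro always_eventually allI less_le_trans[OF _ real_root_ge_zero]) simp_all
next
  fix \<epsilon> :: real
  assume "0 < \<epsilon>"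
  then have "\<forall>\<^sub>F n in sequentially. root n (real (alpha_1_23_4 n) / fact n) \<le> \<epsilon> / 2"
    by (intro eventually_root_alpha_1_23_4_div_fact_le) simp
  then show "\<forall>\<^sub>F n in sequentially. root n (real (alpha_1_23_4 n) / fact n) < \<epsilon>"
    by (rule eventually_mono) (use \<open>0 < \<epsilon>\<close> in simp)
qed

end
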